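(* Let $(X^n,d,\mu)$ be a compact metric measure space satisfying the $n$-dimensional condition with ${\rm Sc}^{{\rm vol}_n}(X^n)\geq\kappa\geq 0$ and SC-radius $r_{X^n}$, and suppose a tangent space $(Y^n,d_Y,\mu_Y,o)$ of $X^n$ exists at a point $p\in X^n$. Then $(Y^n,d_Y,\mu_Y,o)$ satisfies ${\rm Sc}^{{\rm vol}_n}(Y^n)\geq 0$ with SC-radius $\geq r_{X^n}$, i.e. $\mu_Y(B_\epsilon(y))\leq{\rm vol}_E(B_\epsilon(\mathbf{R}^n))$ for all $y\in Y^n$ and all $0<\epsilon\leq r_{X^n}$.
   Context: A metric measure space (mm-space) $(X,d,\mu)$ consists of a complete separable length metric $d$ and a locally finite full-support Borel measure $\mu$. $B_r(x)$ is the closed $r$-ball and ${\rm vol}_E(B_r(\mathbf{R}^n))$ the Euclidean volume of a closed $r$-ball in $\mathbf{R}^n$. $n$-dimensional condition: $\lim_{r\to 0}\mu(B_r(x))/{\rm vol}_E(B_r(\mathbf{R}^n))=1$ for all $x$. For $\gamma>0$, $S^2(\gamma)$ is the round 2-sphere of scalar curvature $2\gamma^{-2}$; $S^2(\gamma)\times\mathbf{R}^{n-2}$ has the product metric $\sqrt{d_S^2+d_E^2}$ and product volume, whose $\epsilon$-balls have volume ${\rm vol}_{S\times E}(B_\epsilon(S^2(\gamma)\times\mathbf{R}^{n-2}))$. For a compact mm-space $X$ with the $n$-dimensional condition: ${\rm Sc}^{{\rm vol}_n}(X)\geq 0$ with SC-radius $r_X>0$ means $\mu(B_\epsilon(x))\leq{\rm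 vol}_E(B_\epsilon(\mathbf{R}^n))$ for all $x$ and $0<\epsilon\leq r_X$; for $\kappa>0$, ${\rm Sc}^{{\rm vol}_n}(X)\geq\kappa$ means for every $\gamma>\sqrt{2/\kappa}$ there is $r_{X,\gamma}>0$ with $\mu(B_\epsilon(x))<{\rm vol}_{S\times E}(B_\epsilon(S^2(\gamma)\times\mathbf{R}^{n-2}))$ for all $x$ and $0<\epsilon\leq r_{X,\gamma}$, and the SC-radius is $r_X:=\inf_\gamma r_{X,\gamma}$. A map $f$ between metric spaces is an $\epsilon$-isometry if it distorts distances by at most $\epsilon$ and its image is $\epsilon$-dense. Borel measures converge strongly if they converge on every Borel set. Pointed locally compact mm-spaces $(X_i,d_i,\mu_i,p_i)$ converge to $(X,d,\mu,p)$ in the pointed strongly measured Gromov--Hausdorff topology if there are $r_i\to\infty$, $\epsilon_i\to 0$ and measurable pointed $\epsilon_i$-isometries $f_i\colon B_{r_i}(p_i)\to B_{r_i}(p)$ with $(f_i)_*\mu_i\to\mu$ strongly. A pointed mm-space $(Y,d_Y,\mu_Y,o)$ is a tangent space of $(X^n,d,\mu)$ at $p$ if there is a sequence $\lambda_i\to\infty$ such that $(X^n,\lambda_i d,\lambda_i^n\mu,p)$ converges to $(Y,d_Y,\mu_Y,o)$ in this pointed strongly measured Gromov--Hausdorff sense. *)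

theory Defs
  imports "HOL-Analysis.Analysis"
begin

text \<open>Metric measure spaces are modelled on a type: the carrier is UNIV of a type
  of class metric_space, the metric is dist, and the measure is a measure on the
  Borel sets of that type.\<close>

definition curve_length :: "(real \<Rightarrow> 'a::metric_space) \<Rightarrow> ereal" where
  "curve_length g = (SUP ts \<in> {ts. sorted ts \<and> set ts \<subseteq> {0..1}}.
      ereal (\<Sum>i < length ts - 1. dist (g (ts ! i)) (g (ts ! Suc i))))"

definition length_metric_space :: "'a::metric_space itself \<Rightarrow> bool" where
  "length_metric_space _ \<longleftrightarrow>
     (\<forall>x y::'a. \<forall>e>0. \<exists>g. continuous_on {0..1} g \<and> g 0 = x \<and> g 1 = y \<and>
          curve_length g \<le> ereal (dist x y + e))"

definition mm_space :: "'a::metric_space measure \<Rightarrow> bool" where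
  "mm_space \<mu> \<longleftrightarrow>
     complete (UNIV :: 'a set) \<and>
     (\<exists>D::'a set. countable D \<and> closure D = UNIV) \<and>
     length_metric_space TYPE('a) \<and>
     sets \<mu> = sets borel \<and>
     (\<forall>x. \<exists>U. open U \<and> x \<in> U \<and> emeasure \<mu> U < \<infinity>) \<and>
     (\<forall>U. open U \<and> U \<noteq> {} \<longrightarrow> emeasure \<mu> U > 0)"

definition vol_E :: "nat \<Rightarrow> real \<Rightarrow> real" where
  "vol_E n r = unit_ball_vol (real n) * r ^ n"

text \<open>Volume of a closed eps-ball in S^2(gamma) x R^(n-2) with product metric and
  product volume. By homogeneity we centre the ball at (north pole, 0); in spherical
  coordinates (theta, phi) on S^2(gamma) the area element is gamma^2 sin theta, the
  geodesic distance to the north pole is gamma*theta, and the fibre over such a point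
  is a Euclidean (n-2)-ball of radius sqrt(eps^2 - (gamma theta)^2).
  Integrating out phi gives the factor 2 pi.\<close>
definition vol_SE :: "nat \<Rightarrow> real \<Rightarrow> real \<Rightarrow> real" where
  "vol_SE n \<gamma> \<epsilon> = 2 * pi * \<gamma>\<^sup>2 *
     integral {0 .. min pi (\<epsilon> / \<gamma>)}
       (\<lambda>\<theta>. sin \<theta> * vol_E (n - 2) (sqrt (\<epsilon>\<^sup>2 - (\<gamma> * \<theta>)\<^sup>2)))"

definition n_dimensional :: "nat \<Rightarrow> 'a::metric_space measure \<Rightarrow> bool" where
  "n_dimensional n \<mu> \<longleftrightarrow>
     (\<forall>x. ((\<lambda>r. measure \<mu> (cball x r) / vol_E n r) \<longlongrightarrow> 1) (at_right 0))"

text \<open>Sc^{vol_n}(X) \<ge> kappa (kappa \<ge> 0) with SC-radius rX.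
  For kappa > 0 the radii r_{X,gamma} are some admissible choice and rX is their infimum.\<close>
definition Sc_vol_ge :: "nat \<Rightarrow> 'a::metric_space measure \<Rightarrow> real \<Rightarrow> real \<Rightarrow> bool" where
  "Sc_vol_ge n \<mu> \<kappa> rX \<longleftrightarrow>
     (if \<kappa> = 0 then
        rX > 0 \<and> (\<forall>x \<epsilon>. 0 < \<epsilon> \<and> \<epsilon> \<le> rX \<longrightarrow> emeasure \<mu> (cball x \<epsilon>) \<le> ennreal (vol_E n \<epsilon>))
      else
        (\<exists>rg :: real \<Rightarrow> real.
           (\<forall>\<gamma>. \<gamma> > sqrt (2 / \<kappa>) \<longrightarrow> rg \<gamma> > 0 \<and>
              (\<forall>x \<epsilon>. 0 < \<epsilon> \<and> \<epsilon> \<le> rg \<gamma> \<longrightarrow>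
                  emeasure \<mu> (cball x \<epsilon>) < ennreal (vol_SE n \<gamma> \<epsilon>))) \<and>
           rX = (INF \<gamma> \<in> {sqrt (2 / \<kappa>)<..}. rg \<gamma>)))"

text \<open>(X, lam*d, lam^n*mu, p) for a sequence lam: pointed strongly measured GH convergence
  to (Y, dY, muY, q).  The rescaled r-ball around p is the original (r/lam)-ball.\<close>
definition tangent_space_at ::
  "nat \<Rightarrow> 'a::metric_space measure \<Rightarrow> 'a \<Rightarrow> 'b::metric_space measure \<Rightarrow> 'b \<Rightarrow> bool" where
  "tangent_space_at n \<mu> p \<mu>Y q \<longleftrightarrow>
     mm_space \<mu>Y \<and> locally compact (UNIV :: 'b set) \<and>
     (\<exists>lam :: nat \<Rightarrow> real. filterlim lam at_top sequentially \<and> (\<forall>i. lam i > 0) \<and>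
       (\<exists>(r :: nat \<Rightarrow> real) (e :: nat \<Rightarrow> real) (f :: nat \<Rightarrow> 'a \<Rightarrow> 'b).
          filterlim r at_top sequentially \<and> e \<longlonglongrightarrow> 0 \<and>
          (\<forall>i. let D = cball p (r i / lam i) in
               f i \<in> measurable (restrict_space borel D) borel \<and>
               f i p = q \<and>
               f i ` D \<subseteq> cball q (r i) \<and>
               (\<forall>x\<in>D. \<forall>y\<in>D. \<bar>dist (f i x) (f i y) - lam i * dist x y\<bar> \<le> e i) \<and>
               (\<forall>z\<in>cball q (r i). \<exists>x\<in>D. dist (f i x) z \<le> e i)) \<and>
          (\<forall>A \<in> sets borel.
             (\<lambda>i. emeasure (distr (restrict_space (scale_measure (ennreal (lam i ^ n)) \<mu>)
                                    (cball p (r i / lam i))) borel (f i)) A)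
             \<longlonglongrightarrow> emeasure \<mu>Y A)))"

end

(* The tangent space is the limit of the blow-ups (X, lam d, lam^n mu). Up to errors e_i -> 0,
   a ball B_eps(y) of the limit pulls back to a ball of radius (eps + delta) / lam_i in X, which
   lies below the SC-radius for large i. There the volume bound gives mu <= vol_E k, with k = n
   for kappa = 0 and k = max n 2 for kappa > 0 (estimate sin theta <= theta in the integral
   defining vol_SE). Rescaled by lam_i^n this is at most vol_E n (eps + delta), since surplus
   dimensions k - n only shrink it; finally let delta -> 0. *)
theory Submission
  imports Defs
begin

lemma unit_ball_vol_add_two:
  assumes "x \<ge> 0"
  shows "unit_ball_vol (x + 2) = 2 * pi / (x + 2) * unit_ball_vol x"
proof -
  have "x / 2 + 1 > 0" using assms by simp
  then have "x / 2 + 1 \<notin> \<int>\<^sub>\<le>\<^sub>0" "Gamma (x / 2 + 1) > 0"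
    by (auto dest: nonpos_Ints_nonpos)
  moreover have Gamma: "Gamma ((x + 2) / 2 + 1) = (x / 2 + 1) * Gamma (x / 2 + 1)"
    using Gamma_plus1[of "x / 2 + 1"] \<open>x / 2 + 1 \<notin> \<int>\<^sub>\<le>\<^sub>0\<close>
    by (simp add: add_divide_distrib add_ac)
  moreover have powr: "pi powr ((x + 2) / 2) = pi * pi powr (x / 2)"
    by (simp add: add_divide_distrib powr_add)
  ultimately show ?thesis
    using assms unfolding unit_ball_vol_def Gamma powr by (simp add: field_simps)
qed

lemma has_real_derivative_sqrt_power:
  fixes \<gamma> \<rho> \<theta> :: real
  assumes pos: "0 < \<rho>\<^sup>2 - (\<gamma> * \<theta>)\<^sup>2" and "\<gamma> > 0"
  shows "((\<lambda>\<theta>. - (sqrt (\<rho>\<^sup>2 - (\<gamma> * \<theta>)\<^sup>2) ^ (m + 2)) / ((real m + 2) * \<gamma>\<^sup>2))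
     has_real_derivative \<theta> * sqrt (\<rho>\<^sup>2 - (\<gamma> * \<theta>)\<^sup>2) ^ m) (at \<theta>)"
proof -
  define s where "s = sqrt (\<rho>\<^sup>2 - (\<gamma> * \<theta>)\<^sup>2)"
  have "s > 0" using pos by (simp add: s_def)
  have "((\<lambda>\<theta>. \<rho>\<^sup>2 - (\<gamma> * \<theta>)\<^sup>2) has_real_derivative - 2 * \<gamma>\<^sup>2 * \<theta>) (at \<theta>)"
    by (auto intro!: derivative_eq_intros simp: power2_eq_square)
  from DERIV_chain2[OF DERIV_real_sqrt[OF pos] this]
  have "((\<lambda>\<theta>. sqrt (\<rho>\<^sup>2 - (\<gamma> * \<theta>)\<^sup>2)) has_real_derivative - \<gamma>\<^sup>2 * \<theta> / s) (at \<theta>)"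
    by (simp add: s_def divide_simps)
  from DERIV_power[OF this, of "m + 2"]
  have "((\<lambda>\<theta>. sqrt (\<rho>\<^sup>2 - (\<gamma> * \<theta>)\<^sup>2) ^ (m + 2)) has_real_derivative
      - ((real m + 2) * \<gamma>\<^sup>2) * (\<theta> * s ^ m)) (at \<theta>)"
    using \<open>s > 0\<close> by (simp add: s_def field_simps)
  from DERIV_cdivide[OF DERIV_minus[OF this], of "(real m + 2) * \<gamma>\<^sup>2"]
  show ?thesis
    using \<open>\<gamma> > 0\<close> by (simp add: s_def)
qed

lemma has_integral_times_sqrt_power:
  fixes \<gamma> \<rho> a :: real
  assumes "\<gamma> > 0" "\<rho> > 0" "0 \<le> a" "\<gamma> * a \<le> \<rho>"
  shows "((\<lambda>\<theta>. \<theta> * sqrt (\<rho>\<^sup>2 - (\<gamma> * \<theta>)\<^sup>2) ^ m) has_integral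
           (\<rho> ^ (m + 2) - sqrt (\<rho>\<^sup>2 - (\<gamma> * a)\<^sup>2) ^ (m + 2)) / ((real m + 2) * \<gamma>\<^sup>2)) {0..a}"
proof -
  define G where "G \<theta> = - (sqrt (\<rho>\<^sup>2 - (\<gamma> * \<theta>)\<^sup>2) ^ (m + 2)) / ((real m + 2) * \<gamma>\<^sup>2)" for \<theta>
  have "((\<lambda>\<theta>. \<theta> * sqrt (\<rho>\<^sup>2 - (\<gamma> * \<theta>)\<^sup>2) ^ m) has_integral G a - G 0) {0..a}"
  proof (rule fundamental_theorem_of_calculus_interior)
    show "continuous_on {0..a} G"
      unfolding G_def by (intro continuous_intros) (use assms in auto)
    show "(G has_vector_derivative \<theta> * sqrt (\<rho>\<^sup>2 - (\<gamma> * \<theta>)\<^sup>2) ^ m) (at \<theta>)"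
      if "\<theta> \<in> {0<..<a}" for \<theta>
    proof -
      have "0 < \<gamma> * \<theta>" "\<gamma> * \<theta> < \<rho>"
        using that assms by (auto intro: less_le_trans[OF mult_strict_left_mono])
      then have "0 < \<rho>\<^sup>2 - (\<gamma> * \<theta>)\<^sup>2"
        by (simp add: power_strict_mono)
      then show ?thesis
        unfolding G_def has_real_derivative_iff_has_vector_derivative[symmetric]
        using assms(1) by (rule has_real_derivative_sqrt_power)
    qed
  qed (use assms in auto)
  then show ?thesis
    using assms by (simp add: G_def diff_divide_distrib)
qed

lemma integral_sin_times_vol_E_le:
  fixes \<gamma> \<rho> a :: real
  assumes "\<gamma> > 0" "\<rho> > 0" "0 \<le> a" "\<gamma> * a \<le> \<rho>"
  shows "integral {0..a} (\<lambda>\<theta>. sin \<theta> * vol_E m (sqrt (\<rho>\<^sup>2 - (\<gamma> * \<theta>)\<^sup>2)))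
    \<le> unit_ball_vol m * \<rho> ^ (m + 2) / ((real m + 2) * \<gamma>\<^sup>2)"
proof -
  define c where "c = unit_ball_vol (real m)"
  define I where "I = (\<rho> ^ (m + 2) - sqrt (\<rho>\<^sup>2 - (\<gamma> * a)\<^sup>2) ^ (m + 2)) / ((real m + 2) * \<gamma>\<^sup>2)"
  have "c \<ge> 0"
    by (simp add: c_def)
  have "(\<gamma> * a)\<^sup>2 \<le> \<rho>\<^sup>2"
    using assms by (intro power_mono) auto
  have integral: "((\<lambda>\<theta>. c * (\<theta> * sqrt (\<rho>\<^sup>2 - (\<gamma> * \<theta>)\<^sup>2) ^ m)) has_integral c * I) {0..a}"
    unfolding I_def using assms by (intro has_integral_mult_right has_integral_times_sqrt_power)
  have "integral {0..a} (\<lambda>\<theta>. sin \<theta> * vol_E m (sqrt (\<rho>\<^sup>2 - (\<gamma> * \<theta>)\<^sup>2))) \<le> c * I"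
  proof (rule has_integral_le[OF integrable_integral integral])
    show "(\<lambda>\<theta>. sin \<theta> * vol_E m (sqrt (\<rho>\<^sup>2 - (\<gamma> * \<theta>)\<^sup>2))) integrable_on {0..a}"
      unfolding vol_E_def by (intro integrable_continuous_interval continuous_intros)
    show "sin \<theta> * vol_E m (sqrt (\<rho>\<^sup>2 - (\<gamma> * \<theta>)\<^sup>2)) \<le> c * (\<theta> * sqrt (\<rho>\<^sup>2 - (\<gamma> * \<theta>)\<^sup>2) ^ m)"
      if "\<theta> \<in> {0..a}" for \<theta>
    proof -
      have "\<gamma> * \<theta> \<le> \<gamma> * a"
        using that assms by (intro mult_left_mono) auto
      then have "\<gamma> * \<theta> \<le> \<rho>"
        using assms by linarith
      then have "(\<gamma> * \<theta>)\<^sup>2 \<le> \<rho>\<^sup>2"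
        using that assms by (intro power_mono) auto
      then have "0 \<le> c * sqrt (\<rho>\<^sup>2 - (\<gamma> * \<theta>)\<^sup>2) ^ m"
        using \<open>c \<ge> 0\<close> by simp
      then have "sin \<theta> * (c * sqrt (\<rho>\<^sup>2 - (\<gamma> * \<theta>)\<^sup>2) ^ m)
          \<le> \<theta> * (c * sqrt (\<rho>\<^sup>2 - (\<gamma> * \<theta>)\<^sup>2) ^ m)"
        using sin_x_le_x[of \<theta>] that by (intro mult_right_mono) auto
      then show ?thesis
        by (simp add: vol_E_def c_def mult_ac)
    qed
  qed
  also have "c * I \<le> c * (\<rho> ^ (m + 2) / ((real m + 2) * \<gamma>\<^sup>2))"
    using \<open>(\<gamma> * a)\<^sup>2 \<le> \<rho>\<^sup>2\<close> \<open>c \<ge> 0\<close> unfolding I_def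
    by (intro mult_left_mono divide_right_mono) simp_all
  finally show ?thesis
    by (simp add: c_def)
qed

text \<open>For n < 2 the fibre dimension n - 2 in vol_SE truncates to 0, so the comparison is
  with the Euclidean volume in dimension max n 2 rather than n.\<close>
lemma vol_SE_le_vol_E:
  assumes "\<gamma> > 0" "\<rho> > 0"
  shows "vol_SE n \<gamma> \<rho> \<le> vol_E (max n 2) \<rho>"
proof -
  define m where "m = n - 2"
  define a where "a = min pi (\<rho> / \<gamma>)"
  have "0 \<le> a" "a \<le> \<rho> / \<gamma>"
    using assms by (auto simp: a_def)
  then have "\<gamma> * a \<le> \<rho>"
    using assms by (simp add: pos_le_divide_eq mult.commute)
  then have "vol_SE n \<gamma> \<rho> \<le> 2 * pi * \<gamma>\<^sup>2 * (unit_ball_vol m * \<rho> ^ (m + 2) / ((real m + 2) * \<gamma>\<^sup>2))"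
    unfolding vol_SE_def a_def[symmetric] m_def[symmetric]
    using assms \<open>0 \<le> a\<close> by (intro mult_left_mono integral_sin_times_vol_E_le) simp_all
  also have "\<dots> = vol_E (m + 2) \<rho>"
  proof -
    have "(real m + 2) * \<gamma>\<^sup>2 > 0" using assms by simp
    then show ?thesis
      unfolding vol_E_def by (simp add: unit_ball_vol_add_two field_simps)
  qed
  also have "m + 2 = max n 2"
    unfolding m_def by arith
  finally show ?thesis .
qed

lemma Sc_vol_ge_cball_le:
  assumes Sc: "Sc_vol_ge n \<mu> \<kappa> rX" and "\<kappa> \<ge> 0" "0 < \<rho>" "\<rho> \<le> rX"
  shows "emeasure \<mu> (cball x \<rho>) \<le> ennreal (vol_E (if \<kappa> = 0 then n else max n 2) \<rho>)"
proof (cases "\<kappa> = 0")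
  case True
  then show ?thesis using Sc assms(3,4) unfolding Sc_vol_ge_def by auto
next
  case False
  then obtain rg where rg: "\<And>\<gamma>. \<gamma> > sqrt (2 / \<kappa>) \<Longrightarrow> rg \<gamma> > 0 \<and>
      (\<forall>x \<epsilon>. 0 < \<epsilon> \<and> \<epsilon> \<le> rg \<gamma> \<longrightarrow> emeasure \<mu> (cball x \<epsilon>) < ennreal (vol_SE n \<gamma> \<epsilon>))"
    and rX: "rX = (INF \<gamma> \<in> {sqrt (2 / \<kappa>)<..}. rg \<gamma>)"
    using Sc unfolding Sc_vol_ge_def by auto
  define \<gamma> where "\<gamma> = sqrt (2 / \<kappa>) + 1"
  have "\<gamma> > sqrt (2 / \<kappa>)" "\<gamma> > 0"
    unfolding \<gamma>_def using \<open>\<kappa> \<ge> 0\<close> by (auto intro: add_nonneg_pos)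
  have "rX \<le> rg \<gamma>"
    unfolding rX using \<open>\<gamma> > sqrt (2 / \<kappa>)\<close>
    by (intro cINF_lower bdd_belowI[where m = 0]) (auto dest: rg)
  then have "emeasure \<mu> (cball x \<rho>) < ennreal (vol_SE n \<gamma> \<rho>)"
    using rg[OF \<open>\<gamma> > sqrt (2 / \<kappa>)\<close>] assms(3,4) by auto
  also have "\<dots> \<le> ennreal (vol_E (max n 2) \<rho>)"
    using vol_SE_le_vol_E[OF \<open>\<gamma> > 0\<close> \<open>0 < \<rho>\<close>] by (rule ennreal_leI)
  finally show ?thesis using False by simp
qed

lemma eventually_rescaled_vol_E_le:
  assumes "n \<le> k" "R > 0"
  shows "eventually (\<lambda>l. l ^ n * vol_E k (R / l) \<le> vol_E n R) at_top"
  using eventually_ge_at_top[of "max 1 (vol_E k R / vol_E n R)"]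
proof eventually_elim
  case (elim l)
  have "vol_E n R > 0" "vol_E k R > 0" "l > 0"
    using assms elim by (auto simp: vol_E_def)
  have "l ^ n * vol_E k (R / l) = vol_E k R / l ^ (k - n)"
    using \<open>n \<le> k\<close> \<open>l > 0\<close> by (simp add: vol_E_def power_divide power_diff field_simps)
  also have "\<dots> \<le> vol_E n R"
  proof (cases "k = n")
    case False
    then have "vol_E k R / vol_E n R \<le> l ^ (k - n)"
      using elim \<open>n \<le> k\<close> by (intro order.trans[OF _ power_increasing[of 1 "k - n" l]]) auto
    then show ?thesis
      using \<open>vol_E n R > 0\<close> \<open>l > 0\<close> by (simp add: field_simps)
  qed simp
  finally show ?case .
qed

lemma preimage_cball_subset_cball:
  fixes f :: "'a::metric_space \<Rightarrow> 'b::metric_space"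
  assumes distortion: "\<forall>x\<in>D. \<forall>z\<in>D. \<bar>dist (f x) (f z) - l * dist x z\<bar> \<le> e"
    and "x0 \<in> D" "dist (f x0) y \<le> e" "l > 0" "\<epsilon> + 2 * e \<le> l * \<rho>"
  shows "f -` cball y \<epsilon> \<inter> D \<subseteq> cball x0 \<rho>"
proof
  fix x assume x: "x \<in> f -` cball y \<epsilon> \<inter> D"
  then have "l * dist x0 x \<le> dist (f x0) (f x) + e"
    using distortion \<open>x0 \<in> D\<close> by force
  also have "\<dots> \<le> dist (f x0) y + dist y (f x) + e"
    using dist_triangle by simp
  also have "\<dots> \<le> l * \<rho>"
    using x \<open>dist (f x0) y \<le> e\<close> \<open>\<epsilon> + 2 * e \<le> l * \<rho>\<close> by simp
  finally show "x \<in> cball x0 \<rho>"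
    using \<open>l > 0\<close> by simp
qed

lemma emeasure_distr_restrict_space_borel:
  assumes "sets M = sets borel" "D \<in> sets borel"
    and "f \<in> measurable (restrict_space borel D) borel" "A \<in> sets borel"
  shows "emeasure (distr (restrict_space M D) borel f) A = emeasure M (f -` A \<inter> D)"
proof -
  have "space M = UNIV"
    using sets_eq_imp_space_eq[OF assms(1)] by simp
  moreover have "f \<in> measurable (restrict_space M D) borel"
    using assms(3) by (simp add: measurable_cong_sets[OF sets_restrict_space_cong[OF assms(1)]])
  ultimately show ?thesis
    using assms by (simp add: emeasure_distr space_restrict_space emeasure_restrict_space)
qed

lemma emeasure_rescaled_pushforward_cball_le:
  fixes \<mu> :: "'a::metric_space measure" and f :: "'a \<Rightarrow> 'b::metric_space"
  assumes "sets \<mu> = sets borel" "D \<in> sets borel"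
    and "f \<in> measurable (restrict_space borel D) borel"
    and "\<forall>x\<in>D. \<forall>z\<in>D. \<bar>dist (f x) (f z) - l * dist x z\<bar> \<le> e"
    and "x0 \<in> D" "dist (f x0) y \<le> e" "l > 0" "\<epsilon> + 2 * e \<le> l * \<rho>"
  shows "emeasure (distr (restrict_space (scale_measure (ennreal (l ^ n)) \<mu>) D) borel f) (cball y \<epsilon>)
    \<le> ennreal (l ^ n) * emeasure \<mu> (cball x0 \<rho>)"
proof -
  have "emeasure (distr (restrict_space (scale_measure (ennreal (l ^ n)) \<mu>) D) borel f) (cball y \<epsilon>)
      = ennreal (l ^ n) * emeasure \<mu> (f -` cball y \<epsilon> \<inter> D)"
    using assms(1-3) by (simp add: emeasure_distr_restrict_space_borel)
  also have "\<dots> \<le> ennreal (l ^ n) * emeasure \<mu> (cball x0 \<rho>)"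
    using preimage_cball_subset_cball[OF assms(4-8)] assms(1)
    by (intro mult_left_mono emeasure_mono) simp_all
  finally show ?thesis .
qed

lemma ennreal_le_vol_E_of_le_vol_E_plus:
  assumes "\<And>\<delta>. \<delta> > 0 \<Longrightarrow> a \<le> ennreal (vol_E n (\<epsilon> + \<delta>))"
  shows "a \<le> ennreal (vol_E n \<epsilon>)"
proof (rule tendsto_lowerbound)
  show "((\<lambda>\<delta>. ennreal (vol_E n (\<epsilon> + \<delta>))) \<longlongrightarrow> ennreal (vol_E n \<epsilon>)) (at_right 0)"
    unfolding vol_E_def by (intro tendsto_ennrealI tendsto_eq_intros) auto
  show "\<forall>\<^sub>F \<delta> in at_right 0. a \<le> ennreal (vol_E n (\<epsilon> + \<delta>))"
    using assms by (simp add: eventually_at_right_less eventually_mono[OF eventually_at_right_less])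
qed simp

lemma tangent_space_at_cball_le_plus:
  fixes \<mu> :: "'a::metric_space measure" and \<mu>Y :: "'b::metric_space measure"
  assumes sets: "sets \<mu> = sets borel" and tangent: "tangent_space_at n \<mu> p \<mu>Y q"
    and "n \<le> k" "r0 > 0"
    and bound: "\<And>x \<rho>. 0 < \<rho> \<Longrightarrow> \<rho> \<le> r0 \<Longrightarrow> emeasure \<mu> (cball x \<rho>) \<le> ennreal (vol_E k \<rho>)"
    and "\<epsilon> > 0" "\<delta> > 0"
  shows "emeasure \<mu>Y (cball y \<epsilon>) \<le> ennreal (vol_E n (\<epsilon> + \<delta>))"
proof -
  from tangent[unfolded tangent_space_at_def Let_def]
  obtain lam r e f where conv: "\<forall>A \<in> sets borel.
      (\<lambda>i. emeasure (distr (restrict_space (scale_measure (ennreal (lam i ^ n)) \<mu>)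
                       (cball p (r i / lam i))) borel (f i)) A) \<longlonglongrightarrow> emeasure \<mu>Y A"
    and distortion: "\<And>i. \<forall>x\<in>cball p (r i / lam i). \<forall>z\<in>cball p (r i / lam i).
                             \<bar>dist (f i x) (f i z) - lam i * dist x z\<bar> \<le> e i"
    and dense: "\<And>i. \<forall>z\<in>cball q (r i). \<exists>x\<in>cball p (r i / lam i). dist (f i x) z \<le> e i"
    and measurable: "\<And>i. f i \<in> measurable (restrict_space borel (cball p (r i / lam i))) borel"
    and lam: "filterlim lam at_top sequentially" "\<And>i. lam i > 0"
    and r: "filterlim r at_top sequentially" and e: "e \<longlonglongrightarrow> 0"
    \<comment> \<open>conv is listed first: matching it fixes lam, r and f, which the two filterlim
      clauses alone would leave ambiguous.\<close>
    by (elim conjE exE) (rule that; assumption | blast)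
  show ?thesis
  proof (rule tendsto_upperbound[OF conv[rule_format]])
    have "\<forall>\<^sub>F i in sequentially. dist q y \<le> r i"
      using r by (simp add: filterlim_at_top)
    moreover have "\<forall>\<^sub>F i in sequentially. e i \<le> \<delta> / 2"
      using order_tendstoD(2)[OF e, of "\<delta> / 2"] \<open>\<delta> > 0\<close> by (auto elim: eventually_mono)
    moreover have "\<forall>\<^sub>F i in sequentially. (\<epsilon> + \<delta>) / r0 \<le> lam i"
      using lam(1) by (simp add: filterlim_at_top)
    moreover have "\<forall>\<^sub>F i in sequentially. lam i ^ n * vol_E k ((\<epsilon> + \<delta>) / lam i) \<le> vol_E n (\<epsilon> + \<delta>)"
      using eventually_compose_filterlim[OF eventually_rescaled_vol_E_le lam(1)] assms \<open>\<delta> > 0\<close>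
      by simp
    ultimately show "\<forall>\<^sub>F i in sequentially. emeasure (distr (restrict_space
        (scale_measure (ennreal (lam i ^ n)) \<mu>) (cball p (r i / lam i))) borel (f i)) (cball y \<epsilon>)
        \<le> ennreal (vol_E n (\<epsilon> + \<delta>))"
    proof eventually_elim
      case (elim i)
      define \<rho> where "\<rho> = (\<epsilon> + \<delta>) / lam i"
      obtain x0 where x0: "x0 \<in> cball p (r i / lam i)" "dist (f i x0) y \<le> e i"
        using dense[of i] elim(1) by (meson mem_cball)
      have "0 < \<rho>" "\<rho> \<le> r0"
        using elim(3) lam(2)[of i] \<open>\<epsilon> > 0\<close> \<open>\<delta> > 0\<close> \<open>r0 > 0\<close> by (auto simp: \<rho>_def field_simps)
      have "\<epsilon> + 2 * e i \<le> lam i * \<rho>"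
        unfolding \<rho>_def using elim(2) lam(2)[of i] by simp
      with sets measurable distortion x0 lam(2)
      have "emeasure (distr (restrict_space (scale_measure (ennreal (lam i ^ n)) \<mu>)
          (cball p (r i / lam i))) borel (f i)) (cball y \<epsilon>) \<le> ennreal (lam i ^ n) * emeasure \<mu> (cball x0 \<rho>)"
        by (intro emeasure_rescaled_pushforward_cball_le) simp_all
      also have "\<dots> \<le> ennreal (lam i ^ n) * ennreal (vol_E k \<rho>)"
        using bound[OF \<open>0 < \<rho>\<close> \<open>\<rho> \<le> r0\<close>] by (rule mult_left_mono) simp
      also have "\<dots> \<le> ennreal (vol_E n (\<epsilon> + \<delta>))"
        using elim(4) lam(2)[of i] by (simp add: \<rho>_def ennreal_leI flip: ennreal_mult')
      finally show ?case .
    qed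
  qed simp_all
qed

lemma tangent_space_at_cball_le:
  fixes \<mu> :: "'a::metric_space measure" and \<mu>Y :: "'b::metric_space measure"
  assumes "sets \<mu> = sets borel" "tangent_space_at n \<mu> p \<mu>Y q" "n \<le> k" "r0 > 0"
    and "\<And>x \<rho>. 0 < \<rho> \<Longrightarrow> \<rho> \<le> r0 \<Longrightarrow> emeasure \<mu> (cball x \<rho>) \<le> ennreal (vol_E k \<rho>)"
    and "\<epsilon> > 0"
  shows "emeasure \<mu>Y (cball y \<epsilon>) \<le> ennreal (vol_E n \<epsilon>)"
  using tangent_space_at_cball_le_plus[OF assms] by (rule ennreal_le_vol_E_of_le_vol_E_plus)

theorem corollary3p7:
  fixes n :: nat and \<mu> :: "'a::metric_space measure" and \<kappa> rX :: real
    and p :: 'a and \<mu>Y :: "'b::metric_space measure" and q :: 'b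
  assumes "mm_space \<mu>"
    and "compact (UNIV :: 'a set)"
    and "n_dimensional n \<mu>"
    and "\<kappa> \<ge> 0"
    and "Sc_vol_ge n \<mu> \<kappa> rX"
    and "tangent_space_at n \<mu> p \<mu>Y q"
  shows "\<forall>y \<epsilon>. 0 < \<epsilon> \<and> \<epsilon> \<le> rX \<longrightarrow> emeasure \<mu>Y (cball y \<epsilon>) \<le> ennreal (vol_E n \<epsilon>)"
proof (intro allI impI)
  fix y \<epsilon> assume \<epsilon>: "0 < \<epsilon> \<and> \<epsilon> \<le> rX"
  have "sets \<mu> = sets borel"
    using \<open>mm_space \<mu>\<close> unfolding mm_space_def by simp
  from this \<open>tangent_space_at n \<mu> p \<mu>Y q\<close>
  show "emeasure \<mu>Y (cball y \<epsilon>) \<le> ennreal (vol_E n \<epsilon>)"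
  proof (rule tangent_space_at_cball_le)
    show "n \<le> (if \<kappa> = 0 then n else max n 2)" by simp
    show "emeasure \<mu> (cball x \<rho>) \<le> ennreal (vol_E (if \<kappa> = 0 then n else max n 2) \<rho>)"
      if "0 < \<rho>" "\<rho> \<le> rX" for x \<rho>
      using Sc_vol_ge_cball_le[OF \<open>Sc_vol_ge n \<mu> \<kappa> rX\<close> \<open>\<kappa> \<ge> 0\<close> that] .
  qed (use \<epsilon> in auto)
qed

end
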